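(* Let $S'$ be a finite set of polynomials in $\mathbb{Q}[\alpha_1,\dots,\alpha_r]$, let $c\in\mathbb{Q}$ be a constant, and let $S=S'\cup\{c\}$. Then $S$ is compatibility graph reducible if and only if $S'$ is compatibility graph reducible.
   Context: A polynomial is called linear in a variable $x$ if its degree in $x$ is at most one (it may be constant in $x$). One reduction step. Let $T=\{f_1,\dots,f_m\}$ be a finite set of polynomials with rational coefficients, together with a graph $C$ on vertex set $T$ (its compatibility graph), and let $x$ be a variable. If some $f_i$ is not linear in $x$, the step is undefined. Otherwise write $f_i=g_ix+h_i$ with $g_i=\partial f_i/\partial x$ and $h_i=f_i|_{x=0}$. Let $S^1=\{g_i\}$, $S^2=\{h_i\}$, $S^3=\{g_ih_j-h_ig_j : i\neq j,\ f_if_j\in E(C)\}$, and let $T_{(x)}$ be the set of irreducible factors over $\mathbb{Q}$ of the polynomials in $S^1\cup S^2\cup S^3$. Each $q\in T_{(x)}$ receives a set of labels (2-element sets): the label $\{0,i\}$ if $q$ is an irreducible factor of $g_i$; the label $\{i,\infty\}$ if $q$ is an irreducible factor of $h_i$, and additionally the label $\{0,i\}$ if moreover $h_i=f_i$; the label $\{i,j\}$ if $q$ is an irreducible factor of $g_ih_j-h_ig_j\in S^3$. The new compatibility graph $C_{(x)}$ on vertex set $T_{(x)}$ has $qq'$ as an edge iff some label of $q$ and some label of $q'$ have nonempty intersection. Full reduction. Let $S\subseteq\mathbb{Q}[\alpha_1,\dots,\alpha_r]$ be finite and $\sigma$ a permutation of the variables; write $\sigma(i)$ for the $i$-th variable in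 the order. Let $(S_{[\sigma(1)]},C_{[\sigma(1)]})$ be the result of one reduction step with variable $\sigma(1)$ applied to $S$ with the complete graph as compatibility graph. For $k\ge 2$ define inductively $S_{[\sigma(1),\dots,\sigma(k)]}=\bigcap_{1\le i\le k} S_{[\sigma(1),\dots,\widehat{\sigma(i)},\dots,\sigma(k)](\sigma(i))}$, where the subscript $(\sigma(i))$ means one reduction step with variable $\sigma(i)$ applied to the set $S_{[\sigma(1),\dots,\widehat{\sigma(i)},\dots,\sigma(k)]}$ with its compatibility graph; in these intersections polynomials differing by a nonzero constant factor are identified. The compatibility graph $C_{[\sigma(1),\dots,\sigma(k)]}$ has $fg$ as an edge iff $fg$ is an edge of every $C_{[\sigma(1),\dots,\widehat{\sigma(i)},\dots,\sigma(k)](\sigma(i))}$. $S$ is compatibility graph reducible with respect to $\sigma$ if for all $1\le i\le r-1$ the set $S_{[\sigma(1),\dots,\sigma(i)]}$ is defined and all its polynomials are linear in $\sigma(i+1)$. $S$ is compatibility graph reducible if it is so with respect to some permutation $\sigma$. *)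

theory Defs
  imports Complex_Main "HOL-Library.Poly_Mapping" "HOL-Computational_Algebra.Factorial_Ring"
begin

text \<open>Multivariate polynomials over the rationals in the variables 0,1,2,...
  (variable i stands for alpha_(i+1)); a monomial is a finitely supported
  exponent vector nat \<Rightarrow>0 nat.\<close>
type_synonym mpoly = "(nat \<Rightarrow>\<^sub>0 nat) \<Rightarrow>\<^sub>0 rat"

definition mconst :: "rat \<Rightarrow> mpoly" where
  "mconst c = Poly_Mapping.single 0 c"

definition vars :: "mpoly \<Rightarrow> nat set" where
  "vars f = (\<Union>m\<in>Poly_Mapping.keys f. Poly_Mapping.keys m)"

definition linear_in :: "nat \<Rightarrow> mpoly \<Rightarrow> bool" where
  "linear_in x f \<longleftrightarrow> (\<forall>m\<in>Poly_Mapping.keys f. Poly_Mapping.lookup m x \<le> 1)"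

definition mderiv :: "nat \<Rightarrow> mpoly \<Rightarrow> mpoly" where
  "mderiv x f = (\<Sum>m\<in>Poly_Mapping.keys f. Poly_Mapping.single (m - Poly_Mapping.single x 1)
                                 (of_nat (Poly_Mapping.lookup m x) * Poly_Mapping.lookup f m))"

definition subst0 :: "nat \<Rightarrow> mpoly \<Rightarrow> mpoly" where
  "subst0 x f = (\<Sum>m\<in>Poly_Mapping.keys f. if Poly_Mapping.lookup m x = 0 then Poly_Mapping.single m (Poly_Mapping.lookup f m) else 0)"

text \<open>Canonical representative of the class of polynomials differing by a nonzero
  constant factor (used to identify such polynomials).\<close>
definition rep :: "mpoly \<Rightarrow> mpoly" where
  "rep q = (SOME p. \<exists>c. c \<noteq> 0 \<and> p = mconst c * q)"

definition irr_factor :: "mpoly \<Rightarrow> mpoly \<Rightarrow> bool" where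
  "irr_factor q p \<longleftrightarrow> p \<noteq> 0 \<and> irreducible q \<and> q dvd p"

text \<open>Graphs are given by their edge sets: sets of 2-element sets of vertices.\<close>
type_synonym graph = "mpoly set set"

definition complete_graph :: "mpoly set \<Rightarrow> graph" where
  "complete_graph T = {{f, g} | f g. f \<in> T \<and> g \<in> T \<and> f \<noteq> g}"

text \<open>Label symbols: 0, infinity, and the index of a polynomial f_i (identified with f_i).\<close>
datatype lsym = LZero | LInf | LIdx mpoly

definition S3 :: "nat \<Rightarrow> mpoly set \<Rightarrow> graph \<Rightarrow> mpoly set" where
  "S3 x T C = {mderiv x f * subst0 x g - subst0 x f * mderiv x g
                 | f g. f \<in> T \<and> g \<in> T \<and> f \<noteq> g \<and> {f, g} \<in> C}"

definition new_vertices :: "nat \<Rightarrow> mpoly set \<Rightarrow> graph \<Rightarrow> mpoly set" where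
  "new_vertices x T C = rep ` {q. \<exists>p \<in> mderiv x ` T \<union> subst0 x ` T \<union> S3 x T C. irr_factor q p}"

definition labels :: "nat \<Rightarrow> mpoly set \<Rightarrow> graph \<Rightarrow> mpoly \<Rightarrow> lsym set set" where
  "labels x T C q =
     {{LZero, LIdx f} | f. f \<in> T \<and> irr_factor q (mderiv x f)}
   \<union> {{LIdx f, LInf} | f. f \<in> T \<and> irr_factor q (subst0 x f)}
   \<union> {{LZero, LIdx f} | f. f \<in> T \<and> irr_factor q (subst0 x f) \<and> subst0 x f = f}
   \<union> {{LIdx f, LIdx g} | f g. f \<in> T \<and> g \<in> T \<and> f \<noteq> g \<and> {f, g} \<in> C \<and>
        irr_factor q (mderiv x f * subst0 x g - subst0 x f * mderiv x g)}"

definition new_graph :: "nat \<Rightarrow> mpoly set \<Rightarrow> graph \<Rightarrow> graph" where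
  "new_graph x T C = {{q, q'} | q q'. q \<in> new_vertices x T C \<and> q' \<in> new_vertices x T C \<and>
      q \<noteq> q' \<and> (\<exists>l\<in>labels x T C q. \<exists>l'\<in>labels x T C q'. l \<inter> l' \<noteq> {})}"

text \<open>One reduction step with variable x; None = undefined.\<close>
definition red_step :: "nat \<Rightarrow> mpoly set \<times> graph \<Rightarrow> (mpoly set \<times> graph) option" where
  "red_step x TC = (let T = fst TC; C = snd TC in
     if (\<forall>f\<in>T. linear_in x f) then Some (new_vertices x T C, new_graph x T C) else None)"

definition del_nth :: "nat \<Rightarrow> 'a list \<Rightarrow> 'a list" where
  "del_nth i xs = take i xs @ drop (Suc i) xs"

text \<open>Full reduction of S along the list of variables xs (xs = [sigma(1),...,sigma(k)]).
  The case n = 0 gives (S, complete graph); for k = 1 the general formula then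
  yields exactly the single reduction step of S with the complete graph.\<close>
primrec red_aux :: "mpoly set \<Rightarrow> nat \<Rightarrow> nat list \<Rightarrow> (mpoly set \<times> graph) option" where
  "red_aux S 0 xs = Some (S, complete_graph S)"
| "red_aux S (Suc n) xs =
     (let R = (\<lambda>i. Option.bind (red_aux S n (del_nth i xs)) (red_step (xs ! i))) in
      if (\<forall>i<length xs. R i \<noteq> None)
      then Some ((\<Inter>i\<in>{..<length xs}. fst (the (R i))), (\<Inter>i\<in>{..<length xs}. snd (the (R i))))
      else None)"

definition reduction :: "mpoly set \<Rightarrow> nat list \<Rightarrow> (mpoly set \<times> graph) option" where
  "reduction S xs = red_aux S (length xs) xs"

text \<open>sigma given as the list [sigma(1),...,sigma(r)] of the variables 0..r-1.\<close>
definition cg_reducible_wrt :: "nat \<Rightarrow> mpoly set \<Rightarrow> nat list \<Rightarrow> bool" where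
  "cg_reducible_wrt r S \<sigma> \<longleftrightarrow>
     (\<forall>i. 1 \<le> i \<and> i \<le> r - 1 \<longrightarrow>
        (\<exists>R. reduction S (take i \<sigma>) = Some R \<and> (\<forall>f\<in>fst R. linear_in (\<sigma> ! i) f)))"

definition cg_reducible :: "nat \<Rightarrow> mpoly set \<Rightarrow> bool" where
  "cg_reducible r S \<longleftrightarrow> (\<exists>\<sigma>. distinct \<sigma> \<and> set \<sigma> = {..<r} \<and> cg_reducible_wrt r S \<sigma>)"

end

theory Submission
  imports Defs
begin

text \<open>A constant k does not depend on x, equals its value at x = 0, and is a unit or zero.
  Hence it contributes no irreducible factors of its own, and the only new polynomials in
  \<open>S\<^sup>3\<close> are \<open>\<plusminus> k \<partial>g/\<partial>x\<close>, whose factors are already factors of \<open>S\<^sup>1\<close>. The only new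
  labels are \<open>{k, g}\<close> for irreducible factors q of \<open>\<partial>g/\<partial>x\<close>; since k occurs in no other
  label, renaming k to 0 turns them into the existing labels \<open>{0, g}\<close> without destroying
  any intersection. So the first reduction step with the complete graph is unchanged by
  adding k, and every reduction along a nonempty list of variables depends on the initial
  set only through that step.\<close>

lemma mconst_inverse_mult: "c \<noteq> 0 \<Longrightarrow> mconst (inverse c) * mconst c = 1"
  by (simp add: mconst_def mult_single)

lemma mconst_eq_0_iff [simp]: "mconst c = 0 \<longleftrightarrow> c = 0"
  unfolding mconst_def by (metis lookup_single_eq single_zero lookup_zero)

lemma linear_in_mconst: "linear_in x (mconst c)"
  by (simp add: linear_in_def mconst_def)

lemma mderiv_mconst [simp]: "mderiv x (mconst c) = 0"
proof -
  have "Poly_Mapping.keys (mconst c) \<subseteq> {0}"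
    by (simp add: mconst_def)
  then show ?thesis
    unfolding mderiv_def by (intro sum.neutral) auto
qed

lemma subst0_mconst [simp]: "subst0 x (mconst c) = mconst c"
proof (cases "c = 0")
  case True
  then show ?thesis by (simp add: subst0_def mconst_def)
next
  case False
  then have "Poly_Mapping.keys (mconst c) = {0}"
    by (simp add: mconst_def)
  then show ?thesis
    unfolding subst0_def by (simp add: mconst_def)
qed

lemma irr_factor_mconst_mult:
  assumes "irr_factor q (mconst c * g)"
  shows "irr_factor q g"
proof -
  from assms have "c \<noteq> 0" "g \<noteq> 0" "irreducible q" "q dvd mconst c * g"
    by (auto simp: irr_factor_def)
  then have "q dvd mconst (inverse c) * (mconst c * g)"
    by simp
  with \<open>c \<noteq> 0\<close> have "q dvd g"
    by (simp add: mconst_inverse_mult flip: mult.assoc)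
  with \<open>g \<noteq> 0\<close> \<open>irreducible q\<close> show ?thesis
    by (simp add: irr_factor_def)
qed

lemma not_irr_factor_mconst: "\<not> irr_factor q (mconst c)"
  using irr_factor_mconst_mult[of q c 1] irreducible_not_unit
  by (auto simp: irr_factor_def)

lemma not_irr_factor_0 [simp]: "\<not> irr_factor q 0"
  by (simp add: irr_factor_def)

lemma irr_factor_uminus [simp]: "irr_factor q (- g) \<longleftrightarrow> irr_factor q g"
  by (simp add: irr_factor_def)

lemma irr_factor_cross_mconst_left:
  "irr_factor q (mderiv x (mconst c) * subst0 x g - subst0 x (mconst c) * mderiv x g)
   \<Longrightarrow> irr_factor q (mderiv x g)"
  by (auto dest: irr_factor_mconst_mult)

lemma irr_factor_cross_mconst_right:
  "irr_factor q (mderiv x f * subst0 x (mconst c) - subst0 x f * mderiv x (mconst c))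
   \<Longrightarrow> irr_factor q (mderiv x f)"
  by (auto simp: mult.commute dest: irr_factor_mconst_mult)

lemma complete_graph_mono: "T \<subseteq> T' \<Longrightarrow> complete_graph T \<subseteq> complete_graph T'"
  unfolding complete_graph_def by blast

lemma doubleton_in_complete_graph:
  "f \<noteq> g \<Longrightarrow> {f, g} \<in> complete_graph T \<longleftrightarrow> f \<in> T \<and> g \<in> T"
  unfolding complete_graph_def by (auto simp: doubleton_eq_iff)

lemma S3_mono: "T \<subseteq> T' \<Longrightarrow> C \<subseteq> C' \<Longrightarrow> S3 x T C \<subseteq> S3 x T' C'"
  unfolding S3_def by blast

lemma labels_mono: "T \<subseteq> T' \<Longrightarrow> C \<subseteq> C' \<Longrightarrow> labels x T C q \<subseteq> labels x T' C' q"
  unfolding labels_def by blast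

lemma irr_factor_cross_insert:
  assumes "f \<in> insert (mconst c) S" "g \<in> insert (mconst c) S" "f \<noteq> g"
    and "irr_factor q (mderiv x f * subst0 x g - subst0 x f * mderiv x g)"
  shows "(f \<in> S \<and> g \<in> S) \<or> (f = mconst c \<and> g \<in> S \<and> irr_factor q (mderiv x g))
           \<or> (g = mconst c \<and> f \<in> S \<and> irr_factor q (mderiv x f))"
  using assms irr_factor_cross_mconst_left[of q x c g] irr_factor_cross_mconst_right[of q x f c]
  by auto

lemma irr_factor_S3_insert:
  assumes "p \<in> S3 x (insert (mconst c) S) (complete_graph (insert (mconst c) S))"
    and "irr_factor q p"
  shows "(\<exists>p'\<in>S3 x S (complete_graph S). irr_factor q p') \<or> (\<exists>g\<in>S. irr_factor q (mderiv x g))"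
proof -
  from assms(1) obtain f g where fg: "f \<in> insert (mconst c) S" "g \<in> insert (mconst c) S" "f \<noteq> g"
    and p: "p = mderiv x f * subst0 x g - subst0 x f * mderiv x g"
    unfolding S3_def by blast
  from irr_factor_cross_insert[OF fg] assms(2) p
  consider "f \<in> S" "g \<in> S" | "\<exists>g\<in>S. irr_factor q (mderiv x g)"
    by blast
  then show ?thesis
  proof cases
    case 1
    with fg(3) have "{f, g} \<in> complete_graph S"
      by (simp add: doubleton_in_complete_graph)
    with 1 fg(3) have "p \<in> S3 x S (complete_graph S)"
      unfolding S3_def p by blast
    with assms(2) show ?thesis by blast
  qed blast
qed

lemma new_vertices_insert_mconst:
  "new_vertices x (insert (mconst c) S) (complete_graph (insert (mconst c) S))
   = new_vertices x S (complete_graph S)"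
proof -
  let ?A = "insert (mconst c) S"
  let ?PA = "mderiv x ` ?A \<union> subst0 x ` ?A \<union> S3 x ?A (complete_graph ?A)"
  let ?PS = "mderiv x ` S \<union> subst0 x ` S \<union> S3 x S (complete_graph S)"
  have "S3 x S (complete_graph S) \<subseteq> S3 x ?A (complete_graph ?A)"
    by (intro S3_mono complete_graph_mono) auto
  then have PS_PA: "?PS \<subseteq> ?PA"
    by (intro Un_mono image_mono) auto
  have PA_PS: "\<exists>p'\<in>?PS. irr_factor q p'" if p: "p \<in> ?PA" and q: "irr_factor q p" for p q
  proof -
    from p consider "p \<in> ?PS" | "p = 0" | "p = mconst c" | "p \<in> S3 x ?A (complete_graph ?A)"
      by auto
    then show ?thesis
    proof cases
      case 1
      with q show ?thesis by blast
    next
      case 4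
      then show ?thesis
        using irr_factor_S3_insert[OF 4 q] by (elim disjE bexE) auto
    qed (use q not_irr_factor_mconst[of q c] in simp_all)
  qed
  have "{q. \<exists>p\<in>?PA. irr_factor q p} = {q. \<exists>p\<in>?PS. irr_factor q p}"
  proof (intro Collect_cong iffI)
    show "\<exists>p\<in>?PS. irr_factor q p" if "\<exists>p\<in>?PA. irr_factor q p" for q
      using that PA_PS by (elim bexE)
    show "\<exists>p\<in>?PA. irr_factor q p" if "\<exists>p\<in>?PS. irr_factor q p" for q
      using that PS_PA by (meson subsetD)
  qed
  then show ?thesis
    unfolding new_vertices_def by simp
qed

lemma labels_insert_mconst_cases:
  assumes "l \<in> labels x (insert (mconst c) S) (complete_graph (insert (mconst c) S)) q"
  shows "l \<in> labels x S (complete_graph S) q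
    \<or> (\<exists>g\<in>S. l = {LIdx (mconst c), LIdx g} \<and> irr_factor q (mderiv x g))"
proof -
  have no_factor: "\<not> irr_factor q (mderiv x (mconst c))" "\<not> irr_factor q (subst0 x (mconst c))"
    by (simp_all add: not_irr_factor_mconst)
  from assms consider
      (deriv) f where "f \<in> insert (mconst c) S" "irr_factor q (mderiv x f)" "l = {LZero, LIdx f}"
    | (subst) f where "f \<in> insert (mconst c) S" "irr_factor q (subst0 x f)" "l = {LIdx f, LInf}"
    | (subst_eq) f where "f \<in> insert (mconst c) S" "irr_factor q (subst0 x f)" "subst0 x f = f"
        "l = {LZero, LIdx f}"
    | (cross) f g where "f \<in> insert (mconst c) S" "g \<in> insert (mconst c) S" "f \<noteq> g"
        "irr_factor q (mderiv x f * subst0 x g - subst0 x f * mderiv x g)" "l = {LIdx f, LIdx g}"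
    unfolding labels_def by blast
  then show ?thesis
  proof cases
    case (deriv f)
    with no_factor have "f \<in> S"
      by auto
    with deriv have "l \<in> labels x S (complete_graph S) q"
      unfolding labels_def by blast
    then show ?thesis ..
  next
    case (subst f)
    with no_factor have "f \<in> S"
      by auto
    with subst have "l \<in> labels x S (complete_graph S) q"
      unfolding labels_def by blast
    then show ?thesis ..
  next
    case (subst_eq f)
    with no_factor have "f \<in> S"
      by auto
    with subst_eq have "l \<in> labels x S (complete_graph S) q"
      unfolding labels_def by blast
    then show ?thesis ..
  next
    case (cross f g)
    from irr_factor_cross_insert[OF cross(1-4)]
    consider "f \<in> S" "g \<in> S" | "f = mconst c" "g \<in> S" "irr_factor q (mderiv x g)"
      | "g = mconst c" "f \<in> S" "irr_factor q (mderiv x f)"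
      by blast
    then show ?thesis
    proof cases
      case 1
      with cross have "{f, g} \<in> complete_graph S"
        by (simp add: doubleton_in_complete_graph)
      with 1 cross have "l \<in> labels x S (complete_graph S) q"
        unfolding labels_def by (intro UnI2) blast
      then show ?thesis ..
    next
      case 2
      with cross show ?thesis
        by blast
    next
      case 3
      with cross have "l = {LIdx (mconst c), LIdx f}"
        by (simp add: insert_commute)
      with 3 show ?thesis
        by blast
    qed
  qed
qed

lemma mem_of_LIdx_in_labels: "l \<in> labels x T C q \<Longrightarrow> LIdx f \<in> l \<Longrightarrow> f \<in> T"
  unfolding labels_def by (elim UnE) auto

lemma labels_insert_mconst_meet:
  assumes "mconst c \<notin> S"
    and "l \<in> labels x (insert (mconst c) S) (complete_graph (insert (mconst c) S)) q"
    and "l' \<in> labels x (insert (mconst c) S) (complete_graph (insert (mconst c) S)) q'"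
    and "l \<inter> l' \<noteq> {}"
  shows "\<exists>m\<in>labels x S (complete_graph S) q. \<exists>m'\<in>labels x S (complete_graph S) q'. m \<inter> m' \<noteq> {}"
proof -
  define \<rho> where "\<rho> s = (if s = LIdx (mconst c) then LZero else s)" for s
  have \<rho>: "\<rho> ` l \<in> labels x S (complete_graph S) q"
    if "l \<in> labels x (insert (mconst c) S) (complete_graph (insert (mconst c) S)) q" for l q
    using labels_insert_mconst_cases[OF that]
  proof (elim disjE bexE conjE)
    assume l: "l \<in> labels x S (complete_graph S) q"
    with assms(1) have "\<forall>s\<in>l. \<rho> s = s"
      unfolding \<rho>_def by (auto dest: mem_of_LIdx_in_labels)
    then have "\<rho> ` l = id ` l"
      by (intro image_cong) auto
    with l show ?thesis
      by simp
  next
    fix g assume "g \<in> S" "l = {LIdx (mconst c), LIdx g}" "irr_factor q (mderiv x g)"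
    moreover from assms(1) \<open>g \<in> S\<close> have "\<rho> ` l = {LZero, LIdx g}"
      unfolding \<rho>_def \<open>l = _\<close> by auto
    ultimately show ?thesis
      unfolding labels_def by blast
  qed
  from assms(4) have "\<rho> ` l \<inter> \<rho> ` l' \<noteq> {}"
    by blast
  with \<rho>[OF assms(2)] \<rho>[OF assms(3)] show ?thesis
    by blast
qed

lemma new_graph_insert_mconst:
  assumes "mconst c \<notin> S"
  shows "new_graph x (insert (mconst c) S) (complete_graph (insert (mconst c) S))
    = new_graph x S (complete_graph S)"
proof -
  let ?LA = "labels x (insert (mconst c) S) (complete_graph (insert (mconst c) S))"
  let ?LS = "labels x S (complete_graph S)"
  have LS_LA: "?LS q \<subseteq> ?LA q" for q
    by (intro labels_mono complete_graph_mono) auto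
  have meet_iff: "(\<exists>l\<in>?LA q. \<exists>l'\<in>?LA q'. l \<inter> l' \<noteq> {}) \<longleftrightarrow> (\<exists>l\<in>?LS q. \<exists>l'\<in>?LS q'. l \<inter> l' \<noteq> {})"
    for q q'
  proof
    assume "\<exists>l\<in>?LA q. \<exists>l'\<in>?LA q'. l \<inter> l' \<noteq> {}"
    then obtain l l' where "l \<in> ?LA q" "l' \<in> ?LA q'" "l \<inter> l' \<noteq> {}"
      by blast
    then show "\<exists>l\<in>?LS q. \<exists>l'\<in>?LS q'. l \<inter> l' \<noteq> {}"
      by (rule labels_insert_mconst_meet[OF assms])
  next
    assume "\<exists>l\<in>?LS q. \<exists>l'\<in>?LS q'. l \<inter> l' \<noteq> {}"
    then obtain l l' where "l \<in> ?LS q" "l' \<in> ?LS q'" "l \<inter> l' \<noteq> {}"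
      by blast
    with LS_LA show "\<exists>l\<in>?LA q. \<exists>l'\<in>?LA q'. l \<inter> l' \<noteq> {}"
      by blast
  qed
  show ?thesis
    unfolding new_graph_def new_vertices_insert_mconst meet_iff ..
qed

lemma red_step_insert_mconst:
  "red_step x (insert (mconst c) S, complete_graph (insert (mconst c) S))
   = red_step x (S, complete_graph S)"
proof (cases "mconst c \<in> S")
  case False
  then show ?thesis
    by (simp add: red_step_def Let_def linear_in_mconst new_vertices_insert_mconst
      new_graph_insert_mconst)
qed (simp add: insert_absorb)

lemma bind_red_aux_cong:
  assumes "\<And>x. red_step x (S, complete_graph S) = red_step x (T, complete_graph T)"
  shows "Option.bind (red_aux S n xs) (red_step x) = Option.bind (red_aux T n xs) (red_step x)"
proof (induction n arbitrary: xs x)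
  case 0
  show ?case by (simp add: assms)
next
  case (Suc n)
  have "red_aux S (Suc n) xs = red_aux T (Suc n) xs"
    by (simp only: red_aux.simps Suc.IH)
  then show ?case by simp
qed

lemma reduction_cong:
  assumes "\<And>x. red_step x (S, complete_graph S) = red_step x (T, complete_graph T)"
    and "xs \<noteq> []"
  shows "reduction S xs = reduction T xs"
proof -
  obtain n where "length xs = Suc n"
    using assms(2) by (cases xs) auto
  then show ?thesis
    unfolding reduction_def by (simp only: red_aux.simps bind_red_aux_cong[OF assms(1)])
qed

lemma cg_reducible_cong:
  assumes "\<And>x. red_step x (S, complete_graph S) = red_step x (T, complete_graph T)"
  shows "cg_reducible r S \<longleftrightarrow> cg_reducible r T"
proof -
  have "cg_reducible_wrt r S \<sigma> \<longleftrightarrow> cg_reducible_wrt r T \<sigma>" if "length \<sigma> = r" for \<sigma>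
  proof -
    have "reduction S (take i \<sigma>) = reduction T (take i \<sigma>)" if "1 \<le> i" "i \<le> r - 1" for i
      using that \<open>length \<sigma> = r\<close> by (intro reduction_cong[OF assms]) auto
    then show ?thesis
      unfolding cg_reducible_wrt_def by auto
  qed
  moreover have "length \<sigma> = r" if "distinct \<sigma>" "set \<sigma> = {..<r}" for \<sigma> :: "nat list"
    using that distinct_card[of \<sigma>] by simp
  ultimately show ?thesis
    unfolding cg_reducible_def by blast
qed

theorem proposition3p5:
  fixes r :: nat and S' :: "mpoly set" and c :: rat
  assumes "finite S'"
    and "\<forall>f\<in>S'. vars f \<subseteq> {..<r}"
  shows "cg_reducible r (insert (mconst c) S') \<longleftrightarrow> cg_reducible r S'"
  using red_step_insert_mconst by (rule cg_reducible_cong)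

end
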